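(* Let $(X,\le)$ be a poset and $E$ an equivalence relation on $X$ with ${\le}\subseteq E$. Let $\alpha:X\to X$ be an order automorphism of $(X,\le)$ and $\beta:X\to X$ a self-inverse dual order automorphism of $(X,\le)$ such that $\alpha,\beta\subseteq E$ and $\beta=\alpha\circ\beta\circ\alpha$. Then for all $n\in\omega$: (i) $\alpha^n\circ\beta$ and $\beta\circ\alpha^n$ are dual order automorphisms of $(X,\le)$; (ii) $\alpha^n\circ\beta\subseteq E$ and $\beta\circ\alpha^n\subseteq E$; (iii) $\alpha^n\circ\beta$ and $\beta\circ\alpha^n$ are self-inverse; (iv) $\alpha\circ(\alpha^n\circ\beta)\circ\alpha=\alpha^n\circ\beta$ and $\alpha\circ(\beta\circ\alpha^n)\circ\alpha=\beta\circ\alpha^n$.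
   Context: Functions $X\to X$ are identified with their graphs $\{(x,\gamma(x))\}$ and composed as relations: $R\circ S=\{(x,y)\mid\exists z\,((x,z)\in R,(z,y)\in S)\}$; $\alpha^0=\mathrm{id}_X$, $\alpha^{k+1}=\alpha^k\circ\alpha$. Order automorphism: bijection with $x\le y\iff\alpha(x)\le\alpha(y)$; dual order automorphism: bijection with $x\le y\iff\beta(y)\le\beta(x)$; self-inverse: $\gamma\circ\gamma=\mathrm{id}_X$. *)

theory Defs
  imports Main
begin

text \<open>Functions are identified with their graphs; relations are composed
  with \<open>O\<close> (diagrammatic: \<open>R O S = {(x,y). \<exists>z. (x,z)\<in>R \<and> (z,y)\<in>S}\<close>),
  and powers are \<open>R ^^ n\<close> with \<open>R ^^ 0 = Id\<close>, \<open>R ^^ Suc n = R ^^ n O R\<close>.\<close>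

definition graph :: "('a \<Rightarrow> 'a) \<Rightarrow> 'a rel" where
  "graph f = {(x, f x) | x. True}"

definition order_automorphism :: "('a::order \<Rightarrow> 'a) \<Rightarrow> bool" where
  "order_automorphism f \<longleftrightarrow> bij f \<and> (\<forall>x y. x \<le> y \<longleftrightarrow> f x \<le> f y)"

definition dual_order_automorphism :: "('a::order \<Rightarrow> 'a) \<Rightarrow> bool" where
  "dual_order_automorphism f \<longleftrightarrow> bij f \<and> (\<forall>x y. x \<le> y \<longleftrightarrow> f y \<le> f x)"

definition self_inverse :: "('a \<Rightarrow> 'a) \<Rightarrow> bool" where
  "self_inverse f \<longleftrightarrow> graph f O graph f = Id"

end

theory Submission
  imports Defs
begin

text \<open>Everything except the order-theoretic part (i) is a calculation with the relations
  \<open>A = graph \<alpha>\<close> and \<open>B = graph \<beta>\<close> alone. Since \<open>A\<close> commutes with its powers,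
  the identity \<open>B = A O B O A\<close> iterates to \<open>B = A\<^sup>n O B O A\<^sup>n\<close>; this at once gives the
  invariance (iv), and together with \<open>B O B = Id\<close> it gives
  \<open>(A\<^sup>n O B) O (A\<^sup>n O B) = B O B = Id\<close>, i.e. (iii). Part (ii) holds because \<open>E\<close>
  is reflexive and transitive, and (i) because composing a dual order automorphism with
  an order automorphism yields a dual order automorphism.\<close>

lemma graph_relcomp: "graph f O graph g = graph (g \<circ> f)"
  unfolding graph_def by auto

lemma graph_relpow: "graph f ^^ n = graph (f ^^ n)"
proof (induction n)
  case 0
  show ?case by (auto simp: graph_def)
next
  case (Suc n)
  then show ?case by (simp add: graph_relcomp funpow_swap1 comp_def)
qed

lemma order_automorphism_comp:
  assumes "order_automorphism f" and "order_automorphism g"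
  shows "order_automorphism (f \<circ> g)"
proof -
  from assms have "bij f" "bij g"
    and f: "\<And>x y. f x \<le> f y \<longleftrightarrow> x \<le> y" and g: "\<And>x y. g x \<le> g y \<longleftrightarrow> x \<le> y"
    unfolding order_automorphism_def by blast+
  then show ?thesis
    unfolding order_automorphism_def by (simp add: bij_comp f g)
qed

lemma order_automorphism_funpow:
  "order_automorphism f \<Longrightarrow> order_automorphism (f ^^ n)"
proof (induction n)
  case 0
  show ?case by (simp add: order_automorphism_def bij_id[unfolded id_def])
next
  case (Suc n)
  then have "order_automorphism (f ^^ n)" by simp
  then show ?case unfolding funpow.simps(2) by (rule order_automorphism_comp[OF Suc.prems])
qed

lemma dual_order_automorphism_comp:
  assumes "dual_order_automorphism g" and "order_automorphism f"
  shows "dual_order_automorphism (g \<circ> f)" and "dual_order_automorphism (f \<circ> g)"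
proof -
  from assms have "bij f" "bij g"
    and f: "\<And>x y. f x \<le> f y \<longleftrightarrow> x \<le> y" and g: "\<And>x y. g y \<le> g x \<longleftrightarrow> x \<le> y"
    unfolding order_automorphism_def dual_order_automorphism_def by blast+
  then show "dual_order_automorphism (g \<circ> f)" "dual_order_automorphism (f \<circ> g)"
    unfolding dual_order_automorphism_def by (simp_all add: bij_comp f g)
qed

lemma relpow_subset_refl_trans:
  assumes "refl E" and "trans E" and "R \<subseteq> E"
  shows "R ^^ n \<subseteq> E"
proof (induction n)
  case 0
  show ?case using assms(1) by (auto dest: refl_onD)
next
  case (Suc n)
  then have "R ^^ Suc n \<subseteq> E O E"
    using assms(3) by (simp add: relcomp_mono)
  also have "\<dots> \<subseteq> E" using assms(2) by (rule trans_O_subset)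
  finally show ?case .
qed

lemma relpow_sandwich_eq:
  assumes "B = A O B O A"
  shows "B = A ^^ n O B O A ^^ n"
proof (induction n)
  case 0
  show ?case by simp
next
  case (Suc n)
  have "A ^^ Suc n O B O A ^^ Suc n = A ^^ n O (A O B O A) O A ^^ n"
    by (simp add: relpow_commute O_assoc)
  also have "\<dots> = B" by (simp only: assms[symmetric] Suc.IH[symmetric])
  finally show ?case by simp
qed

lemma relpow_sandwich_relcomp_eq:
  assumes "B = A O B O A"
  shows "A O (A ^^ n O B) O A = A ^^ n O B" and "A O (B O A ^^ n) O A = B O A ^^ n"
proof -
  have "A O (A ^^ n O B) O A = (A O A ^^ n) O B O A" by (simp add: O_assoc)
  also have "\<dots> = A ^^ n O (A O B O A)" by (simp add: relpow_commute O_assoc)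
  also have "\<dots> = A ^^ n O B" by (simp only: assms[symmetric])
  finally show "A O (A ^^ n O B) O A = A ^^ n O B" .
  have "A O (B O A ^^ n) O A = A O B O (A ^^ n O A)" by (simp add: O_assoc)
  also have "\<dots> = (A O B O A) O A ^^ n" by (simp add: relpow_commute O_assoc)
  also have "\<dots> = B O A ^^ n" by (simp only: assms[symmetric])
  finally show "A O (B O A ^^ n) O A = B O A ^^ n" .
qed

lemma relcomp_involutive_if_sandwich_eq:
  assumes "B O B = Id" and "B = P O B O P"
  shows "(P O B) O (P O B) = Id" and "(B O P) O (B O P) = Id"
proof -
  have "(P O B) O (P O B) = (P O B O P) O B" by (simp add: O_assoc)
  then show "(P O B) O (P O B) = Id" by (simp only: assms(1) assms(2)[symmetric])
  have "(B O P) O (B O P) = B O (P O B O P)" by (simp add: O_assoc)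
  then show "(B O P) O (B O P) = Id" by (simp only: assms(1) assms(2)[symmetric])
qed

theorem lemma3p19:
  fixes E :: "('a::order) rel" and \<alpha> \<beta> :: "'a \<Rightarrow> 'a"
  assumes "equiv UNIV E"
    and "{(x, y). x \<le> y} \<subseteq> E"
    and "order_automorphism \<alpha>"
    and "dual_order_automorphism \<beta>"
    and "self_inverse \<beta>"
    and "graph \<alpha> \<subseteq> E" and "graph \<beta> \<subseteq> E"
    and "graph \<beta> = graph \<alpha> O graph \<beta> O graph \<alpha>"
  shows "\<forall>n::nat.
      (\<exists>\<gamma>. graph \<gamma> = (graph \<alpha> ^^ n) O graph \<beta> \<and> dual_order_automorphism \<gamma>) \<and>
      (\<exists>\<gamma>. graph \<gamma> = graph \<beta> O (graph \<alpha> ^^ n) \<and> dual_order_automorphism \<gamma>) \<and>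
      (graph \<alpha> ^^ n) O graph \<beta> \<subseteq> E \<and>
      graph \<beta> O (graph \<alpha> ^^ n) \<subseteq> E \<and>
      (\<exists>\<gamma>. graph \<gamma> = (graph \<alpha> ^^ n) O graph \<beta> \<and> self_inverse \<gamma>) \<and>
      (\<exists>\<gamma>. graph \<gamma> = graph \<beta> O (graph \<alpha> ^^ n) \<and> self_inverse \<gamma>) \<and>
      graph \<alpha> O ((graph \<alpha> ^^ n) O graph \<beta>) O graph \<alpha> = (graph \<alpha> ^^ n) O graph \<beta> \<and>
      graph \<alpha> O (graph \<beta> O (graph \<alpha> ^^ n)) O graph \<alpha> = graph \<beta> O (graph \<alpha> ^^ n)"
proof -
  have graph_left: "graph (\<beta> \<circ> \<alpha> ^^ n) = graph \<alpha> ^^ n O graph \<beta>"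
    and graph_right: "graph (\<alpha> ^^ n \<circ> \<beta>) = graph \<beta> O graph \<alpha> ^^ n" for n
    by (simp_all add: graph_relpow graph_relcomp)
  have dual: "dual_order_automorphism (\<beta> \<circ> \<alpha> ^^ n)" "dual_order_automorphism (\<alpha> ^^ n \<circ> \<beta>)" for n
    using dual_order_automorphism_comp[OF assms(4) order_automorphism_funpow[OF assms(3)]] .
  have "refl E" "trans E" using assms(1) by (simp_all add: equiv_def)
  have sub: "graph \<alpha> ^^ n O graph \<beta> \<subseteq> E" "graph \<beta> O graph \<alpha> ^^ n \<subseteq> E" for n
  proof -
    have "graph \<alpha> ^^ n \<subseteq> E" using \<open>refl E\<close> \<open>trans E\<close> assms(6) by (rule relpow_subset_refl_trans)
    with assms(7) trans_O_subset[OF \<open>trans E\<close>]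
    show "graph \<alpha> ^^ n O graph \<beta> \<subseteq> E" "graph \<beta> O graph \<alpha> ^^ n \<subseteq> E"
      by (meson relcomp_mono order_trans)+
  qed
  have "graph \<beta> O graph \<beta> = Id" using assms(5) unfolding self_inverse_def .
  from relcomp_involutive_if_sandwich_eq[OF this relpow_sandwich_eq[OF assms(8)]]
  have inv: "self_inverse (\<beta> \<circ> \<alpha> ^^ n)" "self_inverse (\<alpha> ^^ n \<circ> \<beta>)" for n
    unfolding self_inverse_def graph_left graph_right .
  show ?thesis
    using dual sub inv
    unfolding relpow_sandwich_relcomp_eq[OF assms(8)]
    unfolding graph_left[symmetric] graph_right[symmetric]
    by blast
qed

end
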